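(* In the restricted cut-and-choose setting described in the context, for every $\alpha\in\mathbb{R}$ and either choice of attack placement (before or after the delegated unitary), the overall acceptance probabilities satisfy $$|p_H-p_D^{\alpha}|\le \sqrt{1-\cos\!\left(\tfrac{\alpha}{2}\right)^{2N}}=\sqrt{1-\left(1-\sin\!\left(\tfrac{\alpha}{2}\right)^2\right)^{N}},$$ where $N=\sum_{n\ge 0} n\,\Omega(n)$ is the expected number of test rounds (assumed finite).
   Context: Restricted cut-and-choose setting. Fix $k\ge 1$ and let $\mathcal{X}=\mathbb{C}^{2^k}$. Let $P(\alpha)=\mathrm{diag}(1,e^{i\alpha})$ and $A_\alpha=\mathbb{1}_2^{\otimes(k-1)}\otimes P(\alpha)$ (phase rotation on the $k$-th qubit). Let $\Omega$ be a probability distribution on $\mathbb{N}=\{0,1,2,\dots\}$ (the number $n$ of test rounds), with finite mean $N=\sum_n n\,\Omega(n)$. For each $n\in\mathbb{N}$ and each round $i\in\{1,\dots,n+1\}$ there is a test (trap) unitary $T_{n,i}\in\mathrm{U}(\mathcal{X})$ and a test input unit vector $|\chi_{n,i}\rangle\in\mathcal{X}$; and for each $n$ a measurement operator $\mu_{k,n}$ on $\mathcal{X}^{\otimes n}$ with $0\le\mu_{k,n}\le \mathbb{1}$ (the "accept" outcome). The output round $\ell$ is uniform on $\{1,\dots,n+1\}$; all rounds $i\ne\ell$ are test rounds, and the round $\ell$ carries the client's computation. The phase attack with parameter $\alpha$ replaces each delegated unitary $T$ by $T^\alpha$, where either $T^\alpha=T A_\alpha$ for all rounds (attack before the unitary)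 or $T^\alpha=A_\alpha T$ for all rounds (attack after the unitary). Define $$p^H_{n,\ell}=\mathrm{Tr}\Big[\mu_{k,n}\bigotimes_{i\ne\ell} T_{n,i}|\chi_{n,i}\rangle\langle\chi_{n,i}|T_{n,i}^\dagger\Big],\qquad p^{D}_{n,\ell}=\mathrm{Tr}\Big[\mu_{k,n}\bigotimes_{i\ne\ell} T^\alpha_{n,i}|\chi_{n,i}\rangle\langle\chi_{n,i}|(T^\alpha_{n,i})^\dagger\Big],$$ (tensor products over $i\in\{1,\dots,n+1\}\setminus\{\ell\}$ in increasing order), and $$p_H=\sum_{n\ge0}\frac{\Omega(n)}{n+1}\sum_{\ell=1}^{n+1}p^H_{n,\ell},\qquad p_D^{\alpha}=\sum_{n\ge0}\frac{\Omega(n)}{n+1}\sum_{\ell=1}^{n+1}p^D_{n,\ell}.$$ *)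

theory Defs
  imports Complex_Main "Jordan_Normal_Form.Matrix"
begin

definition adj :: "complex mat \<Rightarrow> complex mat" where
  "adj A = mat (dim_col A) (dim_row A) (\<lambda>(i,j). cnj (A $$ (j,i)))"

definition is_unitary :: "nat \<Rightarrow> complex mat \<Rightarrow> bool" where
  "is_unitary d U \<longleftrightarrow> U \<in> carrier_mat d d \<and> adj U * U = 1\<^sub>m d \<and> U * adj U = 1\<^sub>m d"

definition unit_cvec :: "nat \<Rightarrow> complex vec \<Rightarrow> bool" where
  "unit_cvec d v \<longleftrightarrow> v \<in> carrier_vec d \<and> (\<Sum>j<d. (cmod (v $ j))^2) = 1"

definition psd :: "nat \<Rightarrow> complex mat \<Rightarrow> bool" where
  "psd d M \<longleftrightarrow> M \<in> carrier_mat d d \<and>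
     (\<forall>v \<in> carrier_vec d. let q = (\<Sum>i<d. \<Sum>j<d. cnj (v $ i) * M $$ (i,j) * v $ j)
                           in Im q = 0 \<and> Re q \<ge> 0)"

text \<open>Kronecker (tensor) product; first factor is the most significant one.\<close>
definition kron :: "complex mat \<Rightarrow> complex mat \<Rightarrow> complex mat" where
  "kron A B = mat (dim_row A * dim_row B) (dim_col A * dim_col B)
     (\<lambda>(i,j). A $$ (i div dim_row B, j div dim_col B) * B $$ (i mod dim_row B, j mod dim_col B))"

definition kron_list :: "complex mat list \<Rightarrow> complex mat" where
  "kron_list As = foldr kron As (1\<^sub>m 1)"

definition ketbra :: "complex vec \<Rightarrow> complex mat" where
  "ketbra v = mat (dim_vec v) (dim_vec v) (\<lambda>(i,j). v $ i * cnj (v $ j))"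

definition mtrace :: "complex mat \<Rightarrow> complex" where
  "mtrace A = (\<Sum>i<dim_row A. A $$ (i,i))"

definition Pgate :: "real \<Rightarrow> complex mat" where
  "Pgate \<alpha> = mat 2 2 (\<lambda>(i,j). if i = j then (if i = 0 then 1 else cis \<alpha>) else 0)"

definition Aphase :: "nat \<Rightarrow> real \<Rightarrow> complex mat" where
  "Aphase k \<alpha> = kron (1\<^sub>m (2^(k-1))) (Pgate \<alpha>)"

definition attacked :: "nat \<Rightarrow> real \<Rightarrow> bool \<Rightarrow> complex mat \<Rightarrow> complex mat" where
  "attacked k \<alpha> before T = (if before then T * Aphase k \<alpha> else Aphase k \<alpha> * T)"

text \<open>Acceptance probability for n test rounds and output round l, for a family
  U n i of (possibly attacked) unitaries; rounds are 1..n+1, round l is skipped.\<close>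
definition accept_prob ::
  "(nat \<Rightarrow> complex mat) \<Rightarrow> (nat \<Rightarrow> nat \<Rightarrow> complex mat) \<Rightarrow> (nat \<Rightarrow> nat \<Rightarrow> complex vec)
     \<Rightarrow> nat \<Rightarrow> nat \<Rightarrow> real" where
  "accept_prob \<mu> U \<chi> n l =
     Re (mtrace (\<mu> n * kron_list (map (\<lambda>i. U n i * ketbra (\<chi> n i) * adj (U n i))
                                     (filter (\<lambda>i. i \<noteq> l) [1..<n+2]))))"

definition overall_prob ::
  "(nat \<Rightarrow> real) \<Rightarrow> (nat \<Rightarrow> complex mat) \<Rightarrow> (nat \<Rightarrow> nat \<Rightarrow> complex mat)
     \<Rightarrow> (nat \<Rightarrow> nat \<Rightarrow> complex vec) \<Rightarrow> real" where
  "overall_prob \<Omega> \<mu> U \<chi> =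
     (\<Sum>n. \<Omega> n / real (n+1) * (\<Sum>l=1..n+1. accept_prob \<mu> U \<chi> n l))"

end

(*
  Fix the number n of test rounds and the output round l. Honest and attacked test rounds
  prepare the product states F = (x)_i T_i chi_i and G = (x)_i T_i^alpha chi_i, so
  <F|G> is the product of the single-round overlaps. In each round the phase gate multiplies
  the odd-index part of a unit vector by e^(i alpha), which gives an overlap of modulus squared
  at least cos(alpha/2)^2; hence |<F|G>|^2 >= cos(alpha/2)^(2n). For an effect 0 <= mu <= 1
  the acceptance probabilities of two unit vectors differ by at most sqrt(1 - |<F|G>|^2), so
  the conditional acceptance probabilities differ by at most sqrt(1 - cos(alpha/2)^(2n)).
  Averaging over l and n and applying Jensen's inequality twice, to the concave square root
  and to the convex map n |-> cos(alpha/2)^(2n), yields the bound in terms of the mean N.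
*)

theory Submission
  imports Defs
begin

section \<open>Expectations of effects in pure states\<close>

definition braket :: "nat \<Rightarrow> (nat \<Rightarrow> complex) \<Rightarrow> (nat \<Rightarrow> complex) \<Rightarrow> complex" where
  "braket d F G = (\<Sum>i<d. cnj (F i) * G i)"

definition matrix_element ::
    "nat \<Rightarrow> complex mat \<Rightarrow> (nat \<Rightarrow> complex) \<Rightarrow> (nat \<Rightarrow> complex) \<Rightarrow> complex" where
  "matrix_element d M F G = (\<Sum>i<d. \<Sum>j<d. cnj (F i) * M $$ (i,j) * G j)"

lemma braket_lincomb:
  "braket d (\<lambda>i. a * F i + b * G i) (\<lambda>i. c * H i + e * K i) =
    cnj a * c * braket d F H + cnj a * e * braket d F K
    + cnj b * c * braket d G H + cnj b * e * braket d G K"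
  by (simp add: braket_def sum.distrib sum_distrib_left algebra_simps)

lemma matrix_element_lincomb:
  "matrix_element d M (\<lambda>i. a * F i + b * G i) (\<lambda>i. c * H i + e * K i) =
    cnj a * c * matrix_element d M F H + cnj a * e * matrix_element d M F K
    + cnj b * c * matrix_element d M G H + cnj b * e * matrix_element d M G K"
  by (simp add: matrix_element_def sum.distrib sum_distrib_left algebra_simps)

lemma braket_scale: "braket d (\<lambda>i. a * F i) (\<lambda>i. c * H i) = cnj a * c * braket d F H"
  by (simp add: braket_def sum_distrib_left algebra_simps)

lemma matrix_element_scale:
  "matrix_element d M (\<lambda>i. a * F i) (\<lambda>i. c * H i) = cnj a * c * matrix_element d M F H"
  by (simp add: matrix_element_def sum_distrib_left algebra_simps)

lemma braket_swap: "braket d G F = cnj (braket d F G)"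
  by (simp add: braket_def mult.commute)

lemma braket_self: "braket d F F = of_real (\<Sum>i<d. (cmod (F i))\<^sup>2)"
  unfolding braket_def of_real_sum by (intro sum.cong refl) (metis complex_norm_square mult.commute)

lemma psd_matrix_element_nonneg:
  assumes "psd d M"
  shows "0 \<le> Re (matrix_element d M F F)"
proof -
  have "vec d F \<in> carrier_vec d" by simp
  with assms have "0 \<le> Re (\<Sum>i<d. \<Sum>j<d. cnj (vec d F $ i) * M $$ (i,j) * vec d F $ j)"
    unfolding psd_def Let_def by blast
  also have "(\<Sum>i<d. \<Sum>j<d. cnj (vec d F $ i) * M $$ (i,j) * vec d F $ j) = matrix_element d M F F"
    unfolding matrix_element_def by (intro sum.cong refl) simp
  finally show ?thesis .
qed

lemma matrix_element_one_minus:
  assumes "M \<in> carrier_mat d d"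
  shows "matrix_element d (1\<^sub>m d - M) F F = braket d F F - matrix_element d M F F"
proof -
  have "matrix_element d (1\<^sub>m d - M) F F
      = (\<Sum>i<d. \<Sum>j<d. (if i = j then cnj (F i) * F j else 0) - cnj (F i) * M $$ (i,j) * F j)"
    unfolding matrix_element_def using assms
    by (intro sum.cong refl) (simp add: right_diff_distrib left_diff_distrib)
  also have "\<dots> = braket d F F - matrix_element d M F F"
    by (simp add: sum_subtractf braket_def matrix_element_def)
  finally show ?thesis .
qed

lemma psd_matrix_element_le_braket:
  assumes "psd d M" and "psd d (1\<^sub>m d - M)"
  shows "Re (matrix_element d M F F) \<le> Re (braket d F F)"
  using psd_matrix_element_nonneg[OF assms(2), of F] assms(1)
  by (simp add: psd_def matrix_element_one_minus)

lemma psd_abs_expectation_le_one: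
  assumes "psd d M" and "psd d (1\<^sub>m d - M)" and "braket d F F = 1"
  shows "\<bar>Re (matrix_element d M F F)\<bar> \<le> 1"
  using psd_matrix_element_nonneg[OF assms(1)] psd_matrix_element_le_braket[OF assms(1,2)] assms(3)
  by (metis Re_complex_of_real abs_of_nonneg of_real_1)

text \<open>The hypothesis says that the binary quadratic form \<open>(1 - D) p\<^sup>2 + 2 c p r + (1 + D) r\<^sup>2\<close>
  is nonnegative; the conclusion is the corresponding determinant condition.\<close>

lemma sq_le_one_minus_sq_of_quadratic_form_nonneg:
  fixes D c :: real
  assumes "\<And>p r. (p\<^sup>2 - r\<^sup>2) * D \<le> p\<^sup>2 + r\<^sup>2 + 2*p*r*c"
  shows "D\<^sup>2 \<le> 1 - c\<^sup>2"
proof (cases "D < 1")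
  case True
  have "0 \<le> (1 - D) * (1 - D\<^sup>2 - c\<^sup>2)"
    using assms[of "-c" "1 - D"] by (simp add: power2_eq_square algebra_simps)
  with True show ?thesis by (simp add: zero_le_mult_iff)
next
  case False
  with assms[of 1 0] have "D = 1" by simp
  with assms[of "-2" c] have "c\<^sup>2 \<le> 0" by (simp add: power2_eq_square algebra_simps)
  then have "c = 0" by simp
  with \<open>D = 1\<close> show ?thesis by simp
qed

lemma psd_expectation_diff_sq_le_of_real_overlap:
  assumes M: "psd d M" "psd d (1\<^sub>m d - M)"
    and F: "braket d F F = 1" and H: "braket d H H = 1" and FH: "braket d F H = of_real c"
  shows "(Re (matrix_element d M F F) - Re (matrix_element d M H H))\<^sup>2 \<le> 1 - c\<^sup>2"
proof (rule sq_le_one_minus_sq_of_quadratic_form_nonneg)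
  fix p r :: real
  define A where "A = (\<lambda>i. of_real p * F i + of_real r * H i)"
  define B where "B = (\<lambda>i. of_real r * F i + of_real p * H i)"
  \<comment> \<open>The cross terms of \<open>A\<close> and \<open>B\<close> cancel in the difference of their expectations.\<close>
  have AB: "matrix_element d M A A - matrix_element d M B B
      = of_real (p\<^sup>2 - r\<^sup>2) * (matrix_element d M F F - matrix_element d M H H)"
    unfolding A_def B_def matrix_element_lincomb by (simp add: power2_eq_square algebra_simps)
  have "(p\<^sup>2 - r\<^sup>2) * (Re (matrix_element d M F F) - Re (matrix_element d M H H))
      = Re (matrix_element d M A A) - Re (matrix_element d M B B)"
    using arg_cong[OF AB, of Re] by simp
  also have "\<dots> \<le> Re (matrix_element d M A A)"
    using psd_matrix_element_nonneg[OF M(1)] by simp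
  also have "\<dots> \<le> Re (braket d A A)"
    by (rule psd_matrix_element_le_braket[OF M])
  also have "\<dots> = p\<^sup>2 + r\<^sup>2 + 2*p*r*c"
    using FH braket_swap[of d H F] unfolding A_def braket_lincomb F H
    by (simp add: power2_eq_square algebra_simps)
  finally show "(p\<^sup>2 - r\<^sup>2) * (Re (matrix_element d M F F) - Re (matrix_element d M H H))
      \<le> p\<^sup>2 + r\<^sup>2 + 2*p*r*c" .
qed

lemma psd_expectation_diff_sq_le:
  assumes M: "psd d M" "psd d (1\<^sub>m d - M)"
    and F: "braket d F F = 1" and G: "braket d G G = 1"
  shows "(Re (matrix_element d M F F) - Re (matrix_element d M G G))\<^sup>2
           \<le> 1 - (cmod (braket d F G))\<^sup>2"
proof -
  define \<omega> where "\<omega> = cis (- Arg (braket d F G))"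
  define H where "H = (\<lambda>i. \<omega> * G i)"
  have \<omega>: "cnj \<omega> * \<omega> = 1"
    by (simp add: \<omega>_def cis_cnj cis_mult)
  have "braket d F H = \<omega> * rcis (cmod (braket d F G)) (Arg (braket d F G))"
    by (simp add: H_def braket_def sum_distrib_left mult_ac rcis_cmod_Arg)
  also have "\<dots> = of_real (cmod (braket d F G))"
    by (simp add: \<omega>_def rcis_def cis_mult)
  finally have FH: "braket d F H = of_real (cmod (braket d F G))" .
  have H: "braket d H H = 1" and MH: "matrix_element d M H H = matrix_element d M G G"
    using braket_scale[of d \<omega> G \<omega> G] matrix_element_scale[of d M \<omega> G \<omega> G]
    unfolding H_def \<omega> G by simp_all
  show ?thesis
    using psd_expectation_diff_sq_le_of_real_overlap[OF M F H FH] by (simp only: MH)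
qed

section \<open>Product states\<close>

lemma sum_lessThan_mult_div_mod:
  fixes a b :: nat and F G :: "nat \<Rightarrow> 'a::comm_semiring_1"
  shows "(\<Sum>i<a*b. F (i div b) * G (i mod b)) = (\<Sum>q<a. F q) * (\<Sum>r<b. G r)"
proof -
  have "q*b + r < a*b" if "q < a" "r < b" for q r
  proof -
    have "q*b + r < Suc q * b" using that by simp
    also have "\<dots> \<le> a*b" using that by (intro mult_le_mono1) simp
    finally show ?thesis .
  qed
  moreover have "i mod b < b" if "i < a*b" for i
    using that by (cases "b = 0") auto
  ultimately have "(\<Sum>i<a*b. F (i div b) * G (i mod b)) = (\<Sum>(q,r)\<in>{..<a}\<times>{..<b}. F q * G r)"
    by (intro sum.reindex_bij_witness[where i="\<lambda>(q,r). q*b+r" and j="\<lambda>i. (i div b, i mod b)"])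
      (auto simp: less_mult_imp_div_less)
  then show ?thesis by (simp add: sum.cartesian_product sum_product)
qed

definition vtensor :: "complex vec \<Rightarrow> complex vec \<Rightarrow> complex vec" where
  "vtensor u v = vec (dim_vec u * dim_vec v) (\<lambda>i. u $ (i div dim_vec v) * v $ (i mod dim_vec v))"

definition vtensor_list :: "complex vec list \<Rightarrow> complex vec" where
  "vtensor_list vs = foldr vtensor vs (vec 1 (\<lambda>_. 1))"

lemma dim_vtensor [simp]: "dim_vec (vtensor u v) = dim_vec u * dim_vec v"
  by (simp add: vtensor_def)

lemma dim_vtensor_list:
  assumes "\<And>v. v \<in> set vs \<Longrightarrow> dim_vec v = d"
  shows "dim_vec (vtensor_list vs) = d ^ length vs"
  using assms by (induction vs) (auto simp: vtensor_list_def)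

lemma kron_ketbra: "kron (ketbra u) (ketbra v) = ketbra (vtensor u v)"
proof (rule eq_matI)
  fix i j assume "i < dim_row (ketbra (vtensor u v))" "j < dim_col (ketbra (vtensor u v))"
  then have ij: "i < dim_vec u * dim_vec v" "j < dim_vec u * dim_vec v"
    by (auto simp: ketbra_def)
  then have "dim_vec v > 0" by (cases "dim_vec v") auto
  with ij show "kron (ketbra u) (ketbra v) $$ (i, j) = ketbra (vtensor u v) $$ (i, j)"
    by (simp add: kron_def ketbra_def vtensor_def less_mult_imp_div_less)
qed (auto simp: kron_def ketbra_def)

lemma kron_list_map_ketbra: "kron_list (map ketbra vs) = ketbra (vtensor_list vs)"
proof (induction vs)
  case Nil
  have "1\<^sub>m 1 = ketbra (vec 1 (\<lambda>_. 1))"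
    by (rule eq_matI) (auto simp: ketbra_def)
  then show ?case by (simp add: kron_list_def vtensor_list_def)
next
  case (Cons v vs)
  then show ?case by (simp add: kron_list_def vtensor_list_def kron_ketbra)
qed

lemma ketbra_conj:
  assumes U: "U \<in> carrier_mat d d" and x: "x \<in> carrier_vec d"
  shows "U * ketbra x * adj U = ketbra (U *\<^sub>v x)"
proof (rule eq_matI)
  fix i j assume "i < dim_row (ketbra (U *\<^sub>v x))" "j < dim_col (ketbra (U *\<^sub>v x))"
  then have ij: "i < d" "j < d" using U by (auto simp: ketbra_def)
  have "(U * ketbra x * adj U) $$ (i,j)
      = (\<Sum>b<d. (\<Sum>a<d. U $$ (i,a) * (x $ a * cnj (x $ b))) * cnj (U $$ (j,b)))"
    using U x ij by (simp add: index_mult_mat scalar_prod_def ketbra_def adj_def lessThan_atLeast0)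
  also have "\<dots> = (\<Sum>a<d. U $$ (i,a) * x $ a) * cnj (\<Sum>b<d. U $$ (j,b) * x $ b)"
    by (simp add: sum_distrib_left sum_distrib_right mult_ac)
  also have "\<dots> = ketbra (U *\<^sub>v x) $$ (i,j)"
    using U x ij by (simp add: ketbra_def mult_mat_vec_def scalar_prod_def lessThan_atLeast0)
  finally show "(U * ketbra x * adj U) $$ (i,j) = ketbra (U *\<^sub>v x) $$ (i,j)" .
qed (use U in \<open>auto simp: ketbra_def adj_def\<close>)

lemma mtrace_mult_ketbra:
  assumes "M \<in> carrier_mat (dim_vec w) (dim_vec w)"
  shows "mtrace (M * ketbra w) = matrix_element (dim_vec w) M (($) w) (($) w)"
  using assms
  by (auto simp: mtrace_def matrix_element_def ketbra_def index_mult_mat scalar_prod_def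
      lessThan_atLeast0 sum_distrib_right mult_ac intro!: sum.cong)

lemma braket_vtensor:
  assumes "dim_vec u = a" "dim_vec u' = a" "dim_vec v = b" "dim_vec v' = b"
  shows "braket (a*b) (($) (vtensor u v)) (($) (vtensor u' v'))
           = braket a (($) u) (($) u') * braket b (($) v) (($) v')"
proof -
  have "braket (a*b) (($) (vtensor u v)) (($) (vtensor u' v'))
      = (\<Sum>i<a*b. (cnj (u $ (i div b)) * u' $ (i div b)) * (cnj (v $ (i mod b)) * v' $ (i mod b)))"
    unfolding braket_def using assms by (intro sum.cong refl) (auto simp: vtensor_def mult_ac)
  also have "\<dots> = braket a (($) u) (($) u') * braket b (($) v) (($) v')"
    unfolding braket_def by (rule sum_lessThan_mult_div_mod)
  finally show ?thesis .
qed

lemma braket_vtensor_list: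
  assumes "\<And>i. i \<in> set is \<Longrightarrow> dim_vec (f i) = d \<and> dim_vec (g i) = d"
  shows "braket (d ^ length is) (($) (vtensor_list (map f is))) (($) (vtensor_list (map g is)))
           = (\<Prod>i\<leftarrow>is. braket d (($) (f i)) (($) (g i)))"
  using assms
proof (induction "is")
  case Nil
  then show ?case by (simp add: braket_def vtensor_list_def)
next
  case (Cons i "is")
  have "dim_vec (vtensor_list (map f is)) = d ^ length is"
    using Cons.prems dim_vtensor_list[of "map f is" d] by auto
  moreover have "dim_vec (vtensor_list (map g is)) = d ^ length is"
    using Cons.prems dim_vtensor_list[of "map g is" d] by auto
  ultimately show ?case
    using Cons braket_vtensor[of "f i" d "g i" "vtensor_list (map f is)" "d ^ length is"]
    by (simp add: vtensor_list_def)
qed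

definition test_rounds :: "nat \<Rightarrow> nat \<Rightarrow> nat list" where
  "test_rounds n l = filter (\<lambda>i. i \<noteq> l) [1..<n+2]"

definition test_state ::
    "(nat \<Rightarrow> nat \<Rightarrow> complex mat) \<Rightarrow> (nat \<Rightarrow> nat \<Rightarrow> complex vec) \<Rightarrow> nat \<Rightarrow> nat \<Rightarrow> complex vec" where
  "test_state U \<chi> n l = vtensor_list (map (\<lambda>i. U n i *\<^sub>v \<chi> n i) (test_rounds n l))"

lemma set_test_rounds: "set (test_rounds n l) = {1..n+1} - {l}"
  by (auto simp: test_rounds_def)

lemma length_test_rounds:
  assumes "l \<in> {1..n+1}"
  shows "length (test_rounds n l) = n"
proof -
  have "length (test_rounds n l) = card (set (test_rounds n l))"
    unfolding test_rounds_def by (metis distinct_card distinct_filter distinct_upt)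
  also have "\<dots> = card ({1..n+1} - {l})"
    by (simp only: set_test_rounds)
  also have "\<dots> = n"
    using assms by (simp add: card_Diff_singleton)
  finally show ?thesis .
qed

lemma dim_test_state:
  assumes "l \<in> {1..n+1}" and "\<And>i. i \<in> {1..n+1} \<Longrightarrow> U n i \<in> carrier_mat d d"
  shows "dim_vec (test_state U \<chi> n l) = d ^ n"
proof -
  have "dim_vec (U n i *\<^sub>v \<chi> n i) = d" if "i \<in> set (test_rounds n l)" for i
    using assms(2)[of i] that by (auto simp: set_test_rounds)
  then show ?thesis
    unfolding test_state_def
    by (subst dim_vtensor_list[where d = d]) (auto simp: length_test_rounds[OF assms(1)])
qed

lemma accept_prob_eq_matrix_element:
  assumes l: "l \<in> {1..n+1}" and \<mu>: "\<mu> n \<in> carrier_mat (d^n) (d^n)"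
    and U: "\<And>i. i \<in> {1..n+1} \<Longrightarrow> U n i \<in> carrier_mat d d"
    and \<chi>: "\<And>i. i \<in> {1..n+1} \<Longrightarrow> \<chi> n i \<in> carrier_vec d"
  shows "accept_prob \<mu> U \<chi> n l
           = Re (matrix_element (d^n) (\<mu> n) (($) (test_state U \<chi> n l)) (($) (test_state U \<chi> n l)))"
proof -
  have "U n i * ketbra (\<chi> n i) * adj (U n i) = ketbra (U n i *\<^sub>v \<chi> n i)"
    if "i \<in> set (test_rounds n l)" for i
    using that by (auto simp: set_test_rounds intro!: ketbra_conj U \<chi>)
  then have "map (\<lambda>i. U n i * ketbra (\<chi> n i) * adj (U n i)) (test_rounds n l)
      = map ketbra (map (\<lambda>i. U n i *\<^sub>v \<chi> n i) (test_rounds n l))"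
    by simp
  then have "accept_prob \<mu> U \<chi> n l = Re (mtrace (\<mu> n * ketbra (test_state U \<chi> n l)))"
    unfolding accept_prob_def test_rounds_def[symmetric] test_state_def
    by (simp only: kron_list_map_ketbra)
  moreover have "dim_vec (test_state U \<chi> n l) = d^n"
    by (intro dim_test_state l U)
  ultimately show ?thesis
    using mtrace_mult_ketbra[of "\<mu> n"] \<mu> by simp
qed

lemma braket_test_state:
  assumes "l \<in> {1..n+1}"
    and "\<And>i. i \<in> {1..n+1} \<Longrightarrow> U n i \<in> carrier_mat d d \<and> V n i \<in> carrier_mat d d"
  shows "braket (d^n) (($) (test_state U \<chi> n l)) (($) (test_state V \<chi> n l))
           = (\<Prod>i\<in>{1..n+1} - {l}. braket d (($) (U n i *\<^sub>v \<chi> n i)) (($) (V n i *\<^sub>v \<chi> n i)))"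
proof -
  have "dim_vec (U n i *\<^sub>v \<chi> n i) = d \<and> dim_vec (V n i *\<^sub>v \<chi> n i) = d"
    if "i \<in> set (test_rounds n l)" for i
    using assms(2)[of i] that by (auto simp: set_test_rounds)
  then have "braket (d^n) (($) (test_state U \<chi> n l)) (($) (test_state V \<chi> n l))
      = (\<Prod>i\<leftarrow>test_rounds n l. braket d (($) (U n i *\<^sub>v \<chi> n i)) (($) (V n i *\<^sub>v \<chi> n i)))"
    using braket_vtensor_list[of "test_rounds n l" "\<lambda>i. U n i *\<^sub>v \<chi> n i" d]
    by (simp add: test_state_def length_test_rounds[OF assms(1)])
  also have "\<dots> = (\<Prod>i\<in>set (test_rounds n l). braket d (($) (U n i *\<^sub>v \<chi> n i)) (($) (V n i *\<^sub>v \<chi> n i)))"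
    by (rule prod.distinct_set_conv_list[symmetric]) (simp add: test_rounds_def)
  finally show ?thesis
    by (simp only: set_test_rounds)
qed

lemma braket_test_state_self:
  assumes "l \<in> {1..n+1}" and "\<And>i. i \<in> {1..n+1} \<Longrightarrow> U n i \<in> carrier_mat d d"
    and "\<And>i. i \<in> {1..n+1} \<Longrightarrow> braket d (($) (U n i *\<^sub>v \<chi> n i)) (($) (U n i *\<^sub>v \<chi> n i)) = 1"
  shows "braket (d^n) (($) (test_state U \<chi> n l)) (($) (test_state U \<chi> n l)) = 1"
proof -
  have "braket (d^n) (($) (test_state U \<chi> n l)) (($) (test_state U \<chi> n l))
      = (\<Prod>i\<in>{1..n+1} - {l}. braket d (($) (U n i *\<^sub>v \<chi> n i)) (($) (U n i *\<^sub>v \<chi> n i)))"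
    using assms(2) by (intro braket_test_state assms(1)) auto
  also have "\<dots> = 1"
    using assms(3) by (intro prod.neutral) auto
  finally show ?thesis .
qed

section \<open>The phase attack\<close>

lemma braket_mult_vec_adj:
  assumes U: "U \<in> carrier_mat d d" and x: "x \<in> carrier_vec d" and w: "w \<in> carrier_vec d"
  shows "braket d (($) (U *\<^sub>v x)) (($) w) = braket d (($) x) (($) (adj U *\<^sub>v w))"
proof -
  have "braket d (($) (U *\<^sub>v x)) (($) w) = (\<Sum>i<d. \<Sum>a<d. cnj (x $ a) * (cnj (U $$ (i,a)) * w $ i))"
    unfolding braket_def using U x
    by (intro sum.cong refl) (simp add: mult_mat_vec_def scalar_prod_def lessThan_atLeast0
        sum_distrib_left mult_ac)
  also have "\<dots> = (\<Sum>a<d. \<Sum>i<d. cnj (x $ a) * (cnj (U $$ (i,a)) * w $ i))"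
    by (rule sum.swap)
  also have "\<dots> = braket d (($) x) (($) (adj U *\<^sub>v w))"
    unfolding braket_def using U w
    by (intro sum.cong refl) (simp add: mult_mat_vec_def scalar_prod_def lessThan_atLeast0
        adj_def sum_distrib_left)
  finally show ?thesis .
qed

lemma braket_unitary:
  assumes U: "is_unitary d U" and x: "x \<in> carrier_vec d" and y: "y \<in> carrier_vec d"
  shows "braket d (($) (U *\<^sub>v x)) (($) (U *\<^sub>v y)) = braket d (($) x) (($) y)"
proof -
  have UU: "U \<in> carrier_mat d d" "adj U \<in> carrier_mat d d" "adj U * U = 1\<^sub>m d"
    using U by (auto simp: is_unitary_def adj_def)
  have "braket d (($) (U *\<^sub>v x)) (($) (U *\<^sub>v y)) = braket d (($) x) (($) (adj U *\<^sub>v (U *\<^sub>v y)))"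
    using UU x y by (intro braket_mult_vec_adj) auto
  also have "adj U *\<^sub>v (U *\<^sub>v y) = y"
    using UU y by (simp flip: assoc_mult_mat_vec)
  finally show ?thesis .
qed

lemma Aphase_carrier: "1 \<le> k \<Longrightarrow> Aphase k \<alpha> \<in> carrier_mat (2^k) (2^k)"
  by (cases k) (auto simp: Aphase_def kron_def Pgate_def)

text \<open>The \<open>k\<close>-th qubit is the least significant bit of the basis index.\<close>

lemma Aphase_index:
  assumes k: "1 \<le> k" and ij: "i < 2^k" "j < 2^k"
  shows "Aphase k \<alpha> $$ (i,j) = (if i = j then (if even i then 1 else cis \<alpha>) else 0)"
proof -
  have two_pow: "2^(k-1) * 2 = (2::nat)^k"
    using k by (cases k) auto
  with ij have "i div 2 < 2^(k-1)" "j div 2 < 2^(k-1)"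
    by auto
  with ij two_pow have "Aphase k \<alpha> $$ (i,j)
      = (if i div 2 = j div 2 then 1 else 0) * Pgate \<alpha> $$ (i mod 2, j mod 2)"
    by (simp add: Aphase_def kron_def Pgate_def)
  moreover have "i = j \<longleftrightarrow> i div 2 = j div 2 \<and> i mod 2 = j mod 2"
    by (metis div_mult_mod_eq)
  ultimately show ?thesis
    by (auto simp: Pgate_def even_iff_mod_2_eq_zero)
qed

lemma Aphase_mult_vec:
  assumes k: "1 \<le> k" and w: "w \<in> carrier_vec (2^k)"
  shows "Aphase k \<alpha> *\<^sub>v w = vec (2^k) (\<lambda>i. (if even i then 1 else cis \<alpha>) * w $ i)"
proof (rule eq_vecI)
  fix i assume "i < dim_vec (vec (2^k) (\<lambda>i. (if even i then 1 else cis \<alpha>) * w $ i))"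
  then have i: "i < 2^k" by simp
  have "dim_row (Aphase k \<alpha>) = 2^k" "dim_col (Aphase k \<alpha>) = 2^k"
    using Aphase_carrier[OF k] by auto
  then have "(Aphase k \<alpha> *\<^sub>v w) $ i = (\<Sum>j<2^k. Aphase k \<alpha> $$ (i,j) * w $ j)"
    using i w
    by (simp add: mult_mat_vec_def scalar_prod_def lessThan_atLeast0 mult.commute)
  also have "\<dots> = (\<Sum>j<2^k. if i = j then (if even i then 1 else cis \<alpha>) * w $ j else 0)"
    using k i by (intro sum.cong refl) (simp add: Aphase_index)
  finally show "(Aphase k \<alpha> *\<^sub>v w) $ i = vec (2^k) (\<lambda>i. (if even i then 1 else cis \<alpha>) * w $ i) $ i"
    using i by simp
qed (use k w Aphase_carrier[OF k] in auto)

lemma braket_Aphase: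
  assumes k: "1 \<le> k" and w: "w \<in> carrier_vec (2^k)" and w': "w' \<in> carrier_vec (2^k)"
  shows "braket (2^k) (($) (Aphase k \<alpha> *\<^sub>v w)) (($) (Aphase k \<alpha> *\<^sub>v w'))
           = braket (2^k) (($) w) (($) w')"
  unfolding braket_def Aphase_mult_vec[OF k w] Aphase_mult_vec[OF k w']
  by (intro sum.cong refl) (simp add: cis_cnj cis_mult algebra_simps)

lemma cos_half_sq_le_cmod_sq_convex_phase:
  fixes p \<alpha> :: real
  assumes "0 \<le> p" "p \<le> 1"
  shows "cos (\<alpha>/2)^2 \<le> (cmod (of_real p + of_real (1 - p) * cis \<alpha>))^2"
proof -
  have "(cmod (of_real p + of_real (1 - p) * cis \<alpha>))^2 - cos (\<alpha>/2)^2
      = (p + (1 - p) * cos \<alpha>)^2 + ((1 - p) * sin \<alpha>)^2 - (1 + cos \<alpha>) / 2"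
    using cos_double_cos[of "\<alpha>/2"] by (simp add: cmod_power2)
  also have "\<dots> = (1 - cos \<alpha>) * (2 * (p - 1/2)^2)"
    by (simp add: power2_eq_square sin_squared_eq[unfolded power2_eq_square] field_simps)
  also have "\<dots> \<ge> 0" by simp
  finally show ?thesis by simp
qed

lemma cos_half_sq_le_overlap_Aphase:
  assumes k: "1 \<le> k" and w: "w \<in> carrier_vec (2^k)" and unit: "braket (2^k) (($) w) (($) w) = 1"
  shows "cos (\<alpha>/2)^2 \<le> (cmod (braket (2^k) (($) w) (($) (Aphase k \<alpha> *\<^sub>v w))))^2"
proof -
  define p where "p = (\<Sum>i<2^k. if even i then (cmod (w $ i))^2 else 0)"
  define q where "q = (\<Sum>i<2^k. if even i then 0 else (cmod (w $ i))^2)"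
  have "p + q = (\<Sum>i<2^k. (cmod (w $ i))^2)"
    unfolding p_def q_def sum.distrib[symmetric] by (rule sum.cong) auto
  with unit have q: "q = 1 - p"
    unfolding braket_self by (metis add_diff_cancel_left' of_real_eq_1_iff)
  have "0 \<le> p" "0 \<le> q"
    unfolding p_def q_def by (auto intro: sum_nonneg)
  have cnj_mult: "cnj z * (c * z) = c * of_real ((cmod z)^2)" for z c
    using complex_norm_square[of z] by (simp add: mult_ac)
  have "cnj (w $ i) * ((if even i then 1 else cis \<alpha>) * w $ i)
      = of_real (if even i then (cmod (w $ i))^2 else 0)
        + of_real (if even i then 0 else (cmod (w $ i))^2) * cis \<alpha>" for i
    unfolding cnj_mult by simp
  then have "braket (2^k) (($) w) (($) (Aphase k \<alpha> *\<^sub>v w))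
      = (\<Sum>i<2^k. of_real (if even i then (cmod (w $ i))^2 else 0)
                  + of_real (if even i then 0 else (cmod (w $ i))^2) * cis \<alpha>)"
    unfolding braket_def Aphase_mult_vec[OF k w]
    by (intro sum.cong refl) (simp only: index_vec lessThan_iff)
  also have "\<dots> = of_real p + of_real q * cis \<alpha>"
    by (simp add: p_def q_def sum.distrib sum_distrib_right)
  finally show ?thesis
    using cos_half_sq_le_cmod_sq_convex_phase[of p \<alpha>] q \<open>0 \<le> p\<close> \<open>0 \<le> q\<close> by simp
qed

lemma attacked_carrier:
  "1 \<le> k \<Longrightarrow> T \<in> carrier_mat (2^k) (2^k) \<Longrightarrow> attacked k \<alpha> before T \<in> carrier_mat (2^k) (2^k)"
  using Aphase_carrier[of k \<alpha>] by (auto simp: attacked_def)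

lemma attacked_mult_vec:
  assumes "1 \<le> k" "T \<in> carrier_mat (2^k) (2^k)" "x \<in> carrier_vec (2^k)"
  shows "attacked k \<alpha> before T *\<^sub>v x
           = (if before then T *\<^sub>v (Aphase k \<alpha> *\<^sub>v x) else Aphase k \<alpha> *\<^sub>v (T *\<^sub>v x))"
  using assms Aphase_carrier[OF assms(1), of \<alpha>] by (simp add: attacked_def)

lemma braket_attacked_self:
  assumes k: "1 \<le> k" and T: "is_unitary (2^k) T" and x: "x \<in> carrier_vec (2^k)"
  shows "braket (2^k) (($) (attacked k \<alpha> before T *\<^sub>v x)) (($) (attacked k \<alpha> before T *\<^sub>v x))
           = braket (2^k) (($) x) (($) x)"
proof -
  have Tc: "T \<in> carrier_mat (2^k) (2^k)"
    using T by (simp add: is_unitary_def)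
  have Ax: "Aphase k \<alpha> *\<^sub>v x \<in> carrier_vec (2^k)" and Tx: "T *\<^sub>v x \<in> carrier_vec (2^k)"
    using Aphase_carrier[OF k, of \<alpha>] Tc x by auto
  show ?thesis
    unfolding attacked_mult_vec[OF k Tc x]
    using braket_unitary[OF T Ax Ax] braket_Aphase[OF k x x] braket_Aphase[OF k Tx Tx]
      braket_unitary[OF T x x]
    by simp
qed

lemma cos_half_sq_le_overlap_attacked:
  assumes k: "1 \<le> k" and T: "is_unitary (2^k) T" and x: "x \<in> carrier_vec (2^k)"
    and unit: "braket (2^k) (($) x) (($) x) = 1"
  shows "cos (\<alpha>/2)^2 \<le> (cmod (braket (2^k) (($) (T *\<^sub>v x)) (($) (attacked k \<alpha> before T *\<^sub>v x))))^2"
proof -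
  have Tc: "T \<in> carrier_mat (2^k) (2^k)"
    using T by (simp add: is_unitary_def)
  have Ax: "Aphase k \<alpha> *\<^sub>v x \<in> carrier_vec (2^k)" and Tx: "T *\<^sub>v x \<in> carrier_vec (2^k)"
    using Aphase_carrier[OF k, of \<alpha>] Tc x by auto
  have "braket (2^k) (($) (T *\<^sub>v x)) (($) (T *\<^sub>v x)) = 1"
    using braket_unitary[OF T x x] unit by simp
  then show ?thesis
    unfolding attacked_mult_vec[OF k Tc x]
    using cos_half_sq_le_overlap_Aphase[OF k x unit] cos_half_sq_le_overlap_Aphase[OF k Tx]
      braket_unitary[OF T x Ax]
    by simp
qed

lemma power_card_le_cmod_prod_sq:
  assumes "finite A" and "0 \<le> c" and "\<And>i. i \<in> A \<Longrightarrow> c \<le> (cmod (z i))^2"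
  shows "c ^ card A \<le> (cmod (\<Prod>i\<in>A. z i))^2"
proof -
  have "c ^ card A = (\<Prod>i\<in>A. c)"
    by simp
  also have "\<dots> \<le> (\<Prod>i\<in>A. (cmod (z i))^2)"
    using assms by (intro prod_mono) auto
  also have "\<dots> = (cmod (\<Prod>i\<in>A. z i))^2"
    by (simp add: prod_norm flip: prod_power_distrib)
  finally show ?thesis .
qed

lemma accept_prob_phase_attack:
  fixes \<alpha> :: real and before :: bool
  assumes k: "1 \<le> k"
    and T: "\<And>n i. 1 \<le> i \<Longrightarrow> i \<le> n + 1 \<Longrightarrow> is_unitary (2^k) (T n i)"
    and \<chi>: "\<And>n i. 1 \<le> i \<Longrightarrow> i \<le> n + 1 \<Longrightarrow> unit_cvec (2^k) (\<chi> n i)"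
    and \<mu>: "\<And>n. psd ((2^k)^n) (\<mu> n)" "\<And>n. psd ((2^k)^n) (1\<^sub>m ((2^k)^n) - \<mu> n)"
    and l: "l \<in> {1..n+1}"
  shows "\<bar>accept_prob \<mu> T \<chi> n l - accept_prob \<mu> (\<lambda>n i. attacked k \<alpha> before (T n i)) \<chi> n l\<bar>
           \<le> sqrt (1 - (cos (\<alpha>/2)^2)^n)"
    and "\<bar>accept_prob \<mu> T \<chi> n l\<bar> \<le> 1"
    and "\<bar>accept_prob \<mu> (\<lambda>n i. attacked k \<alpha> before (T n i)) \<chi> n l\<bar> \<le> 1"
proof -
  let ?T' = "\<lambda>n i. attacked k \<alpha> before (T n i)" and ?d = "(2::nat)^k" and ?R = "{1..n+1} - {l}"
  have Tc: "T n i \<in> carrier_mat ?d ?d" "?T' n i \<in> carrier_mat ?d ?d"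
    and \<chi>c: "\<chi> n i \<in> carrier_vec ?d" "braket ?d (($) (\<chi> n i)) (($) (\<chi> n i)) = 1"
    if "i \<in> {1..n+1}" for i
    using T[of i n] \<chi>[of i n] that attacked_carrier[OF k]
    by (auto simp: is_unitary_def unit_cvec_def braket_self)
  have unitary: "is_unitary ?d (T n i)" if "i \<in> {1..n+1}" for i
    using T that by simp
  define F where "F = ($) (test_state T \<chi> n l)"
  define G where "G = ($) (test_state ?T' \<chi> n l)"
  have acc: "accept_prob \<mu> T \<chi> n l = Re (matrix_element (?d^n) (\<mu> n) F F)"
    "accept_prob \<mu> ?T' \<chi> n l = Re (matrix_element (?d^n) (\<mu> n) G G)"
    unfolding F_def G_def using Tc \<chi>c \<mu>(1)[of n]
    by (auto simp: psd_def intro!: accept_prob_eq_matrix_element l)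
  have FF: "braket (?d^n) F F = 1"
    unfolding F_def using Tc \<chi>c braket_unitary[OF unitary] by (intro braket_test_state_self l) auto
  have GG: "braket (?d^n) G G = 1"
    unfolding G_def using Tc \<chi>c braket_attacked_self[OF k unitary]
    by (intro braket_test_state_self l) auto
  have "(cos (\<alpha>/2)^2)^n = (cos (\<alpha>/2)^2) ^ card ?R"
    using l by (simp add: card_Diff_singleton)
  also have "\<dots> \<le> (cmod (\<Prod>i\<in>?R. braket ?d (($) (T n i *\<^sub>v \<chi> n i)) (($) (?T' n i *\<^sub>v \<chi> n i))))^2"
    using cos_half_sq_le_overlap_attacked[OF k unitary] \<chi>c
    by (intro power_card_le_cmod_prod_sq) auto
  also have "\<dots> = (cmod (braket (?d^n) F G))^2"
    unfolding F_def G_def using Tc by (subst braket_test_state[OF l]) auto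
  finally have "(accept_prob \<mu> T \<chi> n l - accept_prob \<mu> ?T' \<chi> n l)^2 \<le> 1 - (cos (\<alpha>/2)^2)^n"
    using psd_expectation_diff_sq_le[OF \<mu>(1,2) FF GG] unfolding acc by linarith
  then show "\<bar>accept_prob \<mu> T \<chi> n l - accept_prob \<mu> ?T' \<chi> n l\<bar> \<le> sqrt (1 - (cos (\<alpha>/2)^2)^n)"
    using real_sqrt_le_mono by fastforce
  show "\<bar>accept_prob \<mu> T \<chi> n l\<bar> \<le> 1" "\<bar>accept_prob \<mu> ?T' \<chi> n l\<bar> \<le> 1"
    unfolding acc using psd_abs_expectation_le_one[OF \<mu>(1,2)] FF GG by simp_all
qed

section \<open>Averaging over the rounds\<close>

lemma summable_mult_power:
  fixes \<Omega> :: "nat \<Rightarrow> real"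
  assumes "\<And>n. 0 \<le> \<Omega> n" "summable \<Omega>" "0 \<le> x" "x \<le> 1"
  shows "summable (\<lambda>n. \<Omega> n * x^n)"
  by (rule summable_comparison_test'[OF assms(2)])
    (use assms in \<open>simp add: abs_mult mult_left_le power_le_one\<close>)

lemma powr_mean_le_suminf_power:
  fixes \<Omega> :: "nat \<Rightarrow> real" and x N :: real
  assumes \<Omega>: "\<And>n. 0 \<le> \<Omega> n" "\<Omega> sums 1" and N: "(\<lambda>n. real n * \<Omega> n) sums N"
    and x: "0 < x" "x \<le> 1"
  shows "x powr N \<le> (\<Sum>n. \<Omega> n * x^n)"
proof -
  define E where "E = x powr N"
  \<comment> \<open>Tangent line at the mean \<open>N\<close> of the convex function \<open>t \<mapsto> x powr t\<close>.\<close>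
  have tangent: "\<Omega> n * (E * (1 + (real n - N) * ln x)) \<le> \<Omega> n * x^n" for n
  proof -
    have "x^n = exp (real n * ln x)"
      using x by (simp add: exp_of_nat_mult)
    also have "\<dots> = E * exp ((real n - N) * ln x)"
      using x by (simp add: E_def powr_def flip: exp_add) (simp add: algebra_simps)
    finally have "x^n = E * exp ((real n - N) * ln x)" .
    moreover have "1 + (real n - N) * ln x \<le> exp ((real n - N) * ln x)"
      by (rule exp_ge_add_one_self)
    ultimately have "E * (1 + (real n - N) * ln x) \<le> x^n"
      by (simp add: E_def mult_left_mono)
    then show ?thesis
      using \<Omega>(1) by (rule mult_left_mono)
  qed
  have "(\<lambda>n. E * \<Omega> n + (E * ln x) * (real n * \<Omega> n) - (E * ln x * N) * \<Omega> n)
      sums (E * 1 + (E * ln x) * N - (E * ln x * N) * 1)"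
    by (intro sums_diff sums_add sums_mult \<Omega>(2) N)
  then have "(\<lambda>n. \<Omega> n * (E * (1 + (real n - N) * ln x))) sums E"
    by (simp add: algebra_simps)
  moreover have "summable (\<lambda>n. \<Omega> n * x^n)"
    using \<Omega> x by (intro summable_mult_power) (auto dest: sums_summable)
  ultimately show ?thesis
    unfolding E_def[symmetric] using tangent by (intro sums_le[OF _ _ summable_sums]) auto
qed

lemma suminf_one_minus_power_le:
  fixes \<Omega> :: "nat \<Rightarrow> real" and x N :: real
  assumes \<Omega>: "\<And>n. 0 \<le> \<Omega> n" "\<Omega> sums 1" and N: "(\<lambda>n. real n * \<Omega> n) sums N"
    and x: "0 \<le> x" "x \<le> 1"
  shows "summable (\<lambda>n. \<Omega> n * (1 - x^n))" and "(\<Sum>n. \<Omega> n * (1 - x^n)) \<le> 1 - x powr N"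
proof -
  have sx: "summable (\<lambda>n. \<Omega> n * x^n)"
    using \<Omega> x by (intro summable_mult_power) (auto dest: sums_summable)
  have "x powr N \<le> (\<Sum>n. \<Omega> n * x^n)"
  proof (cases "x = 0")
    case True
    then show ?thesis
      using \<Omega>(1) by (simp add: suminf_nonneg sx)
  next
    case False
    with \<Omega> N x show ?thesis
      by (intro powr_mean_le_suminf_power) auto
  qed
  moreover have "(\<lambda>n. \<Omega> n * (1 - x^n)) sums (1 - (\<Sum>n. \<Omega> n * x^n))"
    using sums_diff[OF \<Omega>(2) summable_sums[OF sx]] by (simp add: right_diff_distrib)
  ultimately show "summable (\<lambda>n. \<Omega> n * (1 - x^n))" "(\<Sum>n. \<Omega> n * (1 - x^n)) \<le> 1 - x powr N"
    by (auto simp: sums_iff)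
qed

lemma sqrt_le_tangent:
  fixes y t :: real
  assumes "0 \<le> y" and "0 < t"
  shows "sqrt y \<le> (y + t\<^sup>2) / (2 * t)"
proof -
  have "2 * sqrt y * t \<le> y + t\<^sup>2"
    using assms(1) sum_squares_bound[of "sqrt y" t] by (simp add: power2_eq_square)
  then show ?thesis
    using assms(2) by (simp add: pos_le_divide_eq mult_ac)
qed

lemma suminf_sqrt_le_sqrt_suminf:
  fixes \<Omega> g :: "nat \<Rightarrow> real"
  assumes \<Omega>: "\<And>n. 0 \<le> \<Omega> n" "\<Omega> sums 1" and g: "\<And>n. 0 \<le> g n"
    and G: "(\<lambda>n. \<Omega> n * g n) sums G"
  shows "summable (\<lambda>n. \<Omega> n * sqrt (g n))" and "(\<Sum>n. \<Omega> n * sqrt (g n)) \<le> sqrt G"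
proof -
  have bound: "\<Omega> n * sqrt (g n) \<le> (\<Omega> n * g n + t\<^sup>2 * \<Omega> n) / (2 * t)" if "0 < t" for n t
  proof -
    have "\<Omega> n * sqrt (g n) \<le> \<Omega> n * ((g n + t\<^sup>2) / (2 * t))"
      by (rule mult_left_mono[OF sqrt_le_tangent[OF g that] \<Omega>(1)])
    also have "\<dots> = (\<Omega> n * g n + t\<^sup>2 * \<Omega> n) / (2 * t)"
      using that by (simp add: field_simps)
    finally show ?thesis .
  qed
  have sums_bound: "(\<lambda>n. (\<Omega> n * g n + t\<^sup>2 * \<Omega> n) / (2 * t)) sums ((G + t\<^sup>2) / (2 * t))" for t
    using sums_divide[OF sums_add[OF G sums_mult[OF \<Omega>(2), of "t\<^sup>2"]], of "2 * t"] by simp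
  have "norm (\<Omega> n * sqrt (g n)) \<le> (\<Omega> n * g n + 1\<^sup>2 * \<Omega> n) / (2 * 1)" for n
    using bound[of 1 n] \<Omega>(1)[of n] g[of n] by simp
  then show sq: "summable (\<lambda>n. \<Omega> n * sqrt (g n))"
    by (rule summable_comparison_test'[OF sums_summable[OF sums_bound[of 1]]])
  show "(\<Sum>n. \<Omega> n * sqrt (g n)) \<le> sqrt G"
  proof (cases "G = 0")
    case True
    then have "summable (\<lambda>n. \<Omega> n * g n)" "(\<Sum>n. \<Omega> n * g n) = 0"
      using G by (auto simp: sums_iff)
    then have "\<Omega> n * g n = 0" for n
      using \<Omega>(1) g by (simp add: suminf_eq_zero_iff)
    then have "(\<lambda>n. \<Omega> n * sqrt (g n)) = (\<lambda>_. 0)"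
      by (intro ext) (metis mult_eq_0_iff real_sqrt_zero)
    then show ?thesis
      using True by simp
  next
    case False
    have "0 \<le> G"
      by (rule sums_le[OF _ sums_zero G]) (simp add: \<Omega>(1) g)
    with False have "0 < G" by simp
    then have "\<Omega> n * sqrt (g n) \<le> (\<Omega> n * g n + (sqrt G)\<^sup>2 * \<Omega> n) / (2 * sqrt G)" for n
      by (intro bound) simp
    from sums_le[OF this summable_sums[OF sq] sums_bound[of "sqrt G"]]
    have "(\<Sum>n. \<Omega> n * sqrt (g n)) \<le> (G + (sqrt G)\<^sup>2) / (2 * sqrt G)" .
    also have "\<dots> = sqrt G"
      using \<open>0 < G\<close> by (simp add: real_div_sqrt)
    finally show ?thesis .
  qed
qed

lemma abs_average_le:
  fixes w B :: real and c :: "nat \<Rightarrow> real"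
  assumes "0 \<le> w" and "\<And>l. l \<in> {1..n+1} \<Longrightarrow> \<bar>c l\<bar> \<le> B"
  shows "\<bar>w / real (n+1) * (\<Sum>l=1..n+1. c l)\<bar> \<le> w * B"
proof -
  have "\<bar>\<Sum>l=1..n+1. c l\<bar> \<le> real (n+1) * B"
    using sum_abs[of c "{1..n+1}"] sum_bounded_above[of "{1..n+1}" "\<lambda>l. \<bar>c l\<bar>" B] assms(2)
    by simp
  then have "w / real (n+1) * \<bar>\<Sum>l=1..n+1. c l\<bar> \<le> w / real (n+1) * (real (n+1) * B)"
    using assms(1) by (intro mult_left_mono) auto
  then show ?thesis
    using assms(1) by (simp add: abs_mult)
qed

lemma abs_mixture_diff_le:
  fixes \<Omega> e :: "nat \<Rightarrow> real" and a b :: "nat \<Rightarrow> nat \<Rightarrow> real"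
  assumes \<Omega>: "\<And>n. 0 \<le> \<Omega> n" "summable \<Omega>" and e: "summable (\<lambda>n. \<Omega> n * e n)"
    and a: "\<And>n l. l \<in> {1..n+1} \<Longrightarrow> \<bar>a n l\<bar> \<le> 1" and b: "\<And>n l. l \<in> {1..n+1} \<Longrightarrow> \<bar>b n l\<bar> \<le> 1"
    and ab: "\<And>n l. l \<in> {1..n+1} \<Longrightarrow> \<bar>a n l - b n l\<bar> \<le> e n"
  shows "\<bar>(\<Sum>n. \<Omega> n / real (n+1) * (\<Sum>l=1..n+1. a n l))
           - (\<Sum>n. \<Omega> n / real (n+1) * (\<Sum>l=1..n+1. b n l))\<bar> \<le> (\<Sum>n. \<Omega> n * e n)"
proof -
  define A where "A n = \<Omega> n / real (n+1) * (\<Sum>l=1..n+1. a n l)" for n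
  define B where "B n = \<Omega> n / real (n+1) * (\<Sum>l=1..n+1. b n l)" for n
  have "norm (A n) \<le> \<Omega> n" "norm (B n) \<le> \<Omega> n" for n
    unfolding A_def B_def
    using abs_average_le[OF \<Omega>(1), of n "a n" 1] abs_average_le[OF \<Omega>(1), of n "b n" 1] a b
    by simp_all
  then have "summable A" "summable B"
    by (auto intro: summable_comparison_test'[OF \<Omega>(2)])
  have "\<bar>A n - B n\<bar> \<le> \<Omega> n * e n" for n
    unfolding A_def B_def using abs_average_le[OF \<Omega>(1), of n "\<lambda>l. a n l - b n l" "e n"] ab
    by (simp add: sum_subtractf right_diff_distrib)
  then have "(\<Sum>n. A n - B n) \<le> (\<Sum>n. \<Omega> n * e n)" "(\<Sum>n. B n - A n) \<le> (\<Sum>n. \<Omega> n * e n)"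
    using \<open>summable A\<close> \<open>summable B\<close> e by (auto intro!: suminf_le summable_diff simp: abs_le_iff)
  then show ?thesis
    using suminf_diff[OF \<open>summable A\<close> \<open>summable B\<close>] suminf_diff[OF \<open>summable B\<close> \<open>summable A\<close>]
    unfolding A_def B_def by linarith
qed

theorem mainTheorem1:
  fixes k :: nat and \<alpha> :: real and before :: bool
    and \<Omega> :: "nat \<Rightarrow> real"
    and T :: "nat \<Rightarrow> nat \<Rightarrow> complex mat" and \<chi> :: "nat \<Rightarrow> nat \<Rightarrow> complex vec"
    and \<mu> :: "nat \<Rightarrow> complex mat"
  assumes k: "k \<ge> 1"
    and Omega_nonneg: "\<And>n. \<Omega> n \<ge> 0"
    and Omega_sums: "\<Omega> sums 1"
    and mean_finite: "summable (\<lambda>n. real n * \<Omega> n)"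
    and T_unitary: "\<And>n i. 1 \<le> i \<Longrightarrow> i \<le> n + 1 \<Longrightarrow> is_unitary (2^k) (T n i)"
    and chi_unit: "\<And>n i. 1 \<le> i \<Longrightarrow> i \<le> n + 1 \<Longrightarrow> unit_cvec (2^k) (\<chi> n i)"
    and mu_pos: "\<And>n. psd ((2^k)^n) (\<mu> n)"
    and mu_le_one: "\<And>n. psd ((2^k)^n) (1\<^sub>m ((2^k)^n) - \<mu> n)"
  shows "\<bar>overall_prob \<Omega> \<mu> T \<chi>
           - overall_prob \<Omega> \<mu> (\<lambda>n i. attacked k \<alpha> before (T n i)) \<chi>\<bar>
         \<le> sqrt (1 - (cos (\<alpha>/2) ^ 2) powr (\<Sum>n. real n * \<Omega> n))"
proof -
  define x where "x = cos (\<alpha>/2) ^ 2"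
  have x: "0 \<le> x" "x \<le> 1"
    by (auto simp: x_def abs_square_le_1)
  then have one_minus_power: "0 \<le> 1 - x^n" for n
    by (simp add: power_le_one)
  note jensen_power = suminf_one_minus_power_le[OF Omega_nonneg Omega_sums
      summable_sums[OF mean_finite] x]
  note jensen_sqrt = suminf_sqrt_le_sqrt_suminf[where g = "\<lambda>n. 1 - x^n", OF Omega_nonneg Omega_sums
      one_minus_power summable_sums[OF jensen_power(1)]]
  note accept = accept_prob_phase_attack[OF k T_unitary chi_unit mu_pos mu_le_one]
  have "\<bar>overall_prob \<Omega> \<mu> T \<chi> - overall_prob \<Omega> \<mu> (\<lambda>n i. attacked k \<alpha> before (T n i)) \<chi>\<bar>
      \<le> (\<Sum>n. \<Omega> n * sqrt (1 - x^n))"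
    unfolding overall_prob_def x_def
    by (rule abs_mixture_diff_le[OF Omega_nonneg sums_summable[OF Omega_sums]
          jensen_sqrt(1)[unfolded x_def] accept(2,3,1)])
  also have "\<dots> \<le> sqrt (\<Sum>n. \<Omega> n * (1 - x^n))"
    by (rule jensen_sqrt(2))
  also have "\<dots> \<le> sqrt (1 - x powr (\<Sum>n. real n * \<Omega> n))"
    using jensen_power(2) by simp
  finally show ?thesis
    by (simp add: x_def)
qed

end
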